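(* Let $A\subset\mathbb{R}^n$ and let $\mu\in M(\mathbb{R}^n)$ be a finite complex Borel measure whose spectrum (support of $\hat\mu$) lies in $A$. Suppose there is a $k$-dimensional linear subspace $V\subset\mathbb{R}^n$ such that for every $a\in\mathbb{R}^n$ the set $(V+a)\cap A$ is a Riesz set on $V+a$. Then $\mu(F)=0$ for every Borel set $F\subset\mathbb{R}^n$ with $\lambda_V(p_V(F))=0$.
   Context: A set $B\subset\mathbb{R}^d$ is a Riesz set if every finite Borel measure on $\mathbb{R}^d$ whose spectrum is contained in $B$ is absolutely continuous with respect to Lebesgue measure. A subset of an affine $k$-plane $V+a$ is called a Riesz set on $V+a$ if, after translating by $-a$ and identifying $V$ with $\mathbb{R}^k$ by a linear isometry, it is a Riesz set in $\mathbb{R}^k$. $p_V$ is the orthogonal projection onto $V$ and $\lambda_V$ is $k$-dimensional Lebesgue measure on $V$. *)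

theory Defs
  imports "HOL-Analysis.Analysis"
begin

text \<open>A finite complex Borel measure on a Euclidean space is represented as
  h \<cdot> M, where M is a finite positive Borel measure and h is an M-integrable
  complex function (every finite complex Borel measure has this form, e.g.
  with M = |mu| and |h| = 1 by the polar decomposition).\<close>

definition finite_cmeasure :: "'a::euclidean_space measure \<Rightarrow> ('a \<Rightarrow> complex) \<Rightarrow> bool" where
  "finite_cmeasure M h \<longleftrightarrow> sets M = sets borel \<and> finite_measure M \<and> integrable M h"

definition cmeasure_val :: "'a::euclidean_space measure \<Rightarrow> ('a \<Rightarrow> complex) \<Rightarrow> 'a set \<Rightarrow> complex" where
  "cmeasure_val M h F = (LINT x:F|M. h x)"

definition cfourier :: "'a::euclidean_space measure \<Rightarrow> ('a \<Rightarrow> complex) \<Rightarrow> 'a \<Rightarrow> complex" where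
  "cfourier M h \<xi> = (LINT x|M. exp (- (2 * pi * \<i>) * complex_of_real (\<xi> \<bullet> x)) * h x)"

definition cspectrum :: "'a::euclidean_space measure \<Rightarrow> ('a \<Rightarrow> complex) \<Rightarrow> 'a set" where
  "cspectrum M h = closure {\<xi>. cfourier M h \<xi> \<noteq> 0}"

definition cabs_cont :: "'a::euclidean_space measure \<Rightarrow> ('a \<Rightarrow> complex) \<Rightarrow> bool" where
  "cabs_cont M h \<longleftrightarrow> (\<forall>F \<in> sets borel. emeasure lborel F = 0 \<longrightarrow> cmeasure_val M h F = 0)"

definition riesz_set :: "'a::euclidean_space set \<Rightarrow> bool" where
  "riesz_set B \<longleftrightarrow> (\<forall>M h. finite_cmeasure M h \<and> cspectrum M h \<subseteq> B \<longrightarrow> cabs_cont M h)"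

definition orth_proj :: "'a::euclidean_space set \<Rightarrow> 'a \<Rightarrow> 'a" where
  "orth_proj V x = (THE v. v \<in> V \<and> (\<forall>w\<in>V. (x - v) \<bullet> w = 0))"

end

theory Submission
  imports Defs
begin

(*
  Write T for the adjoint of the isometry L; in the coordinates of V it is the orthogonal
  projection onto V. For every frequency xi, the image under T of the measure
  e^{-2 pi i xi.x} mu has Fourier transform eta |-> mu^(L eta + xi), so its spectrum lies in the
  fibre {y. L y + xi : A}, which is a Riesz set; hence that image vanishes on every Lebesgue null
  set N. Consequently the restriction of mu to T^{-1} N has identically vanishing Fourier
  transform, so it is the zero measure by the uniqueness theorem for Fourier transforms, which
  holds because bounded continuous functions are approximated by trigonometric polynomials
  uniformly on large boxes. Choosing N as a Borel null set containing T(F) gives mu(F) = 0.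
*)

section \<open>Trigonometric polynomials\<close>

definition fourier_char :: "'a::euclidean_space \<Rightarrow> 'a \<Rightarrow> complex" where
  "fourier_char \<xi> x = exp (2 * pi * \<i> * complex_of_real (\<xi> \<bullet> x))"

lemma cfourier_eq_integral_fourier_char:
  "cfourier M h \<xi> = (LINT x|M. fourier_char (- \<xi>) x * h x)"
  by (simp add: cfourier_def fourier_char_def)

lemma fourier_char_add: "fourier_char (\<xi> + \<eta>) x = fourier_char \<xi> x * fourier_char \<eta> x"
  by (simp add: fourier_char_def inner_add_left distrib_left exp_add)

lemma norm_fourier_char [simp]: "norm (fourier_char \<xi> x) = 1"
  by (simp add: fourier_char_def norm_exp)

lemma continuous_on_fourier_char: "continuous_on S (fourier_char \<xi>)"
  unfolding fourier_char_def by (intro continuous_intros)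

inductive_set trig_poly :: "('a::euclidean_space \<Rightarrow> complex) set" where
  fourier_char: "fourier_char \<xi> \<in> trig_poly"
| add: "f \<in> trig_poly \<Longrightarrow> g \<in> trig_poly \<Longrightarrow> (\<lambda>x. f x + g x) \<in> trig_poly"
| scale: "f \<in> trig_poly \<Longrightarrow> (\<lambda>x. c * f x) \<in> trig_poly"

lemma trig_poly_const: "(\<lambda>x. c) \<in> trig_poly"
  using trig_poly.scale[OF trig_poly.fourier_char[of 0], of c] by (simp add: fourier_char_def)

lemma trig_poly_mult_fourier_char:
  "g \<in> trig_poly \<Longrightarrow> (\<lambda>x. fourier_char \<xi> x * g x) \<in> trig_poly"
proof (induction rule: trig_poly.induct)
  case (fourier_char \<eta>)
  have "fourier_char (\<xi> + \<eta>) = (\<lambda>x. fourier_char \<xi> x * fourier_char \<eta> x)"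
    by (simp add: fun_eq_iff fourier_char_add)
  then show ?case using trig_poly.fourier_char[of "\<xi> + \<eta>"] by simp
next
  case (add f g)
  then show ?case using trig_poly.add[OF add.IH] by (simp add: distrib_left)
next
  case (scale f c)
  then show ?case using trig_poly.scale[OF scale.IH, of c] by (simp add: ac_simps)
qed

lemma trig_poly_mult:
  "f \<in> trig_poly \<Longrightarrow> g \<in> trig_poly \<Longrightarrow> (\<lambda>x. f x * g x) \<in> trig_poly"
proof (induction rule: trig_poly.induct)
  case (fourier_char \<xi>)
  then show ?case by (rule trig_poly_mult_fourier_char)
next
  case (add f1 f2)
  then show ?case using trig_poly.add[OF add.IH] by (simp add: distrib_right)
next
  case (scale f c)
  then show ?case using trig_poly.scale[OF scale.IH, of c] by (simp add: ac_simps)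
qed

lemma trig_poly_sum:
  "(\<And>i. i \<in> I \<Longrightarrow> f i \<in> trig_poly) \<Longrightarrow> (\<lambda>x. \<Sum>i\<in>I. f i x) \<in> trig_poly"
proof (induction I rule: infinite_finite_induct)
  case (insert i I)
  then show ?case using trig_poly.add[of "f i" "\<lambda>x. \<Sum>i\<in>I. f i x"] by simp
qed (use trig_poly_const[of 0] in auto)

lemma trig_poly_continuous: "f \<in> trig_poly \<Longrightarrow> continuous_on S f"
  by (induction rule: trig_poly.induct) (auto intro: continuous_on_fourier_char continuous_intros)

lemma trig_poly_bounded: "f \<in> trig_poly \<Longrightarrow> \<exists>B. \<forall>x. norm (f x) \<le> B"
proof (induction rule: trig_poly.induct)
  case (add f g)
  then obtain B1 B2 where "\<forall>x. norm (f x) \<le> B1" "\<forall>x. norm (g x) \<le> B2" by auto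
  then have "\<forall>x. norm (f x + g x) \<le> B1 + B2" by (meson add_mono norm_triangle_le)
  then show ?case by blast
next
  case (scale f c)
  then obtain B where "\<forall>x. norm (f x) \<le> B" by auto
  then have "\<forall>x. norm (c * f x) \<le> norm c * B" by (simp add: norm_mult mult_left_mono)
  then show ?case by blast
qed auto

lemma trig_poly_sin: "(\<lambda>x. complex_of_real (sin (a \<bullet> x))) \<in> trig_poly"
proof -
  let ?b = "(1 / (2 * pi)) *\<^sub>R a"
  have "complex_of_real (sin (a \<bullet> x)) =
      (1 / (2 * \<i>)) * fourier_char ?b x + (- 1 / (2 * \<i>)) * fourier_char (- ?b) x" for x
    by (simp add: fourier_char_def sin_of_real[symmetric] sin_exp_eq field_simps)
  moreover have "(\<lambda>x. (1 / (2 * \<i>)) * fourier_char ?b x + (- 1 / (2 * \<i>)) * fourier_char (- ?b) x)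
      \<in> trig_poly"
    by (intro trig_poly.add trig_poly.scale trig_poly.fourier_char)
  ultimately show ?thesis by simp
qed

definition sin_coords :: "real \<Rightarrow> 'a::euclidean_space \<Rightarrow> 'a" where
  "sin_coords w x = (\<Sum>i\<in>Basis. sin (w * (x \<bullet> i)) *\<^sub>R i)"

lemma sin_coords_inner_Basis: "i \<in> Basis \<Longrightarrow> sin_coords w x \<bullet> i = sin (w * (x \<bullet> i))"
  unfolding sin_coords_def by (simp add: inner_sum_left inner_Basis if_distrib cong: if_cong)

lemma trig_poly_polynomial_sin_coords:
  "real_polynomial_function q \<Longrightarrow> (\<lambda>x. complex_of_real (q (sin_coords w x))) \<in> trig_poly"
proof (induction rule: real_polynomial_function.induct)
  case (linear f)
  then have "f (sin_coords w x) = (\<Sum>i\<in>Basis. f i * sin ((w *\<^sub>R i) \<bullet> x))" for x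
    by (simp add: sin_coords_def linear_sum linear_scale bounded_linear.linear inner_commute
        mult.commute)
  moreover have "(\<lambda>x. \<Sum>i\<in>Basis. complex_of_real (f i) * complex_of_real (sin ((w *\<^sub>R i) \<bullet> x)))
      \<in> trig_poly"
    by (intro trig_poly_sum trig_poly.scale trig_poly_sin)
  ultimately show ?case by simp
next
  case (mult f g)
  then show ?case using trig_poly_mult[OF mult.IH] by simp
qed (auto intro: trig_poly_const trig_poly.add)

text \<open>Stone-Weierstrass on the cube [-1,1]^n after the substitution s = sin (\<omega> x), which maps
  the box of radius R = \<pi>/(2\<omega>) homeomorphically onto the cube and turns polynomials in s into
  trigonometric polynomials in x.\<close>

lemma trig_poly_approximation:
  fixes f :: "'a::euclidean_space \<Rightarrow> real"
  assumes f: "continuous_on UNIV f" and fB: "\<And>x. \<bar>f x\<bar> \<le> B" and "0 < R" "0 < \<epsilon>"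
  obtains q where "(\<lambda>x. complex_of_real (q x)) \<in> trig_poly"
    and "\<And>x. x \<in> cbox (- R *\<^sub>R One) (R *\<^sub>R One) \<Longrightarrow> \<bar>f x - q x\<bar> < \<epsilon>"
    and "\<And>x. \<bar>q x\<bar> \<le> B + \<epsilon>"
proof -
  define \<omega> where "\<omega> = pi / (2 * R)"
  have "\<omega> > 0" using \<open>0 < R\<close> by (simp add: \<omega>_def)
  define arcsin_coords :: "'a \<Rightarrow> 'a" where
    "arcsin_coords s = (\<Sum>i\<in>Basis. (arcsin (s \<bullet> i) / \<omega>) *\<^sub>R i)" for s
  have sin_coords_in: "sin_coords \<omega> x \<in> cbox (- One) One" for x
    by (auto simp: mem_box sin_coords_inner_Basis)
  have arcsin_sin_coords: "arcsin_coords (sin_coords \<omega> x) = x"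
    if x: "x \<in> cbox (- R *\<^sub>R One) (R *\<^sub>R One)" for x
  proof -
    have "arcsin (sin (\<omega> * (x \<bullet> i))) = \<omega> * (x \<bullet> i)" if i: "i \<in> Basis" for i
    proof -
      have "\<omega> * \<bar>x \<bullet> i\<bar> \<le> \<omega> * R"
        using x i \<open>\<omega> > 0\<close> by (intro mult_left_mono) (auto simp: mem_box abs_le_iff)
      also have "\<omega> * R = pi / 2" using \<open>0 < R\<close> by (simp add: \<omega>_def)
      finally have "\<bar>\<omega> * (x \<bullet> i)\<bar> \<le> pi / 2"
        using \<open>\<omega> > 0\<close> by (simp add: abs_mult)
      then show ?thesis by (simp add: arcsin_sin abs_le_iff)
    qed
    then show ?thesis
      using \<open>\<omega> > 0\<close> by (simp add: arcsin_coords_def sin_coords_inner_Basis euclidean_representation)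
  qed
  have "continuous_on (cbox (- One) One) arcsin_coords"
    unfolding arcsin_coords_def using \<open>\<omega> > 0\<close> by (intro continuous_intros) (auto simp: mem_box)
  then have "continuous_on (cbox (- One) One) (\<lambda>s. f (arcsin_coords s))"
    using continuous_on_subset[OF f] by (intro continuous_on_compose2[OF f]) auto
  then obtain p where p: "real_polynomial_function p"
    and p_approx: "\<And>s. s \<in> cbox (- One) One \<Longrightarrow> \<bar>f (arcsin_coords s) - p s\<bar> < \<epsilon>"
    using Stone_Weierstrass_real_polynomial_function[OF compact_cbox _ \<open>0 < \<epsilon>\<close>] by blast
  show thesis
  proof
    show "(\<lambda>x. complex_of_real (p (sin_coords \<omega> x))) \<in> trig_poly"
      by (rule trig_poly_polynomial_sin_coords[OF p])
    show "\<bar>f x - p (sin_coords \<omega> x)\<bar> < \<epsilon>" if "x \<in> cbox (- R *\<^sub>R One) (R *\<^sub>R One)" for x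
      using p_approx[OF sin_coords_in[of x]] arcsin_sin_coords[OF that] by simp
    show "\<bar>p (sin_coords \<omega> x)\<bar> \<le> B + \<epsilon>" for x
      using p_approx[OF sin_coords_in[of x]] fB[of "arcsin_coords (sin_coords \<omega> x)"] by linarith
  qed
qed

section \<open>Uniqueness of the Fourier transform\<close>

lemma integrable_bounded_mult:
  fixes f g :: "'a \<Rightarrow> 'b::{banach, real_normed_algebra, second_countable_topology}"
  assumes "integrable M g" "f \<in> borel_measurable M" "\<And>x. norm (f x) \<le> B"
  shows "integrable M (\<lambda>x. f x * g x)"
proof (rule Bochner_Integration.integrable_bound)
  show "integrable M (\<lambda>x. B * norm (g x))" using assms(1) by simp
  show "(\<lambda>x. f x * g x) \<in> borel_measurable M"
    using assms(1,2) by (simp add: borel_measurable_integrable)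
  show "AE x in M. norm (f x * g x) \<le> norm (B * norm (g x))"
    using assms(3) by (intro AE_I2 order.trans[OF norm_mult_ineq])
      (metis abs_ge_self mult_right_mono norm_ge_zero order.trans real_norm_def norm_mult)
qed

lemma integrable_trig_poly_mult:
  fixes g :: "'a::euclidean_space \<Rightarrow> complex"
  assumes "sets M = sets borel" "integrable M g" "Q \<in> trig_poly"
  shows "integrable M (\<lambda>x. Q x * g x)"
proof -
  obtain B where "\<And>x. norm (Q x) \<le> B" using trig_poly_bounded[OF assms(3)] by blast
  moreover have "Q \<in> borel_measurable borel"
    by (intro borel_measurable_continuous_onI trig_poly_continuous assms(3))
  then have "Q \<in> borel_measurable M"
    by (simp add: measurable_cong_sets[OF assms(1) refl])
  ultimately show ?thesis using integrable_bounded_mult[OF assms(2)] by blast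
qed

lemma set_integral_norm_outside_cbox_small:
  fixes g :: "'a::euclidean_space \<Rightarrow> 'b::{banach, second_countable_topology}"
  assumes sets: "sets M = sets borel" and g: "integrable M g" and "0 < \<epsilon>"
  obtains R where "0 < R" and "(LINT x:- cbox (- R *\<^sub>R One) (R *\<^sub>R One)|M. norm (g x)) < \<epsilon>"
proof -
  let ?tail = "\<lambda>n::nat. \<lambda>x. indicator (- cbox (- real n *\<^sub>R One) (real n *\<^sub>R One)) x *\<^sub>R norm (g x)"
  have "(\<lambda>n. integral\<^sup>L M (?tail n)) \<longlonglongrightarrow> integral\<^sup>L M (\<lambda>x. 0)"
  proof (rule integral_dominated_convergence[where w="\<lambda>x. norm (g x)"])
    show "?tail n \<in> borel_measurable M" for n
      using g sets by (intro borel_measurable_scaleR borel_measurable_indicator)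
        (auto simp: borel_measurable_integrable)
    show "AE x in M. (\<lambda>n. ?tail n x) \<longlonglongrightarrow> 0"
    proof (intro AE_I2 tendsto_eventually)
      fix x :: 'a
      obtain N :: nat where "norm x \<le> real N" using real_arch_simple by blast
      then have "- real n \<le> x \<bullet> i \<and> x \<bullet> i \<le> real n" if "i \<in> Basis" "N \<le> n" for i n
        using Basis_le_norm[OF that(1), of x] that(2) by arith
      then have "x \<in> cbox (- real n *\<^sub>R One) (real n *\<^sub>R One)" if "N \<le> n" for n
        using that by (simp add: mem_box)
      then show "\<forall>\<^sub>F n in sequentially. ?tail n x = 0"
        by (auto simp: eventually_sequentially intro!: exI[of _ N])
    qed
  qed (use g in \<open>auto split: split_indicator\<close>)
  then have "\<forall>\<^sub>F n in sequentially. integral\<^sup>L M (?tail n) < \<epsilon>"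
    using \<open>0 < \<epsilon>\<close> by (auto dest: order_tendstoD(2))
  then obtain N where "\<And>n. N \<le> n \<Longrightarrow> integral\<^sup>L M (?tail n) < \<epsilon>"
    by (auto simp: eventually_sequentially)
  then have "(LINT x:- cbox (- real (Suc N) *\<^sub>R One) (real (Suc N) *\<^sub>R One)|M. norm (g x)) < \<epsilon>"
    by (simp add: set_lebesgue_integral_def del: of_nat_Suc)
  then show thesis by (rule that[rotated]) simp
qed

lemma norm_integral_continuous_le_if_trig_poly:
  fixes g :: "'a::euclidean_space \<Rightarrow> complex" and f :: "'a \<Rightarrow> real"
  assumes sets: "sets M = sets borel" and g: "integrable M g"
    and trig: "\<And>Q. Q \<in> trig_poly \<Longrightarrow> (LINT x|M. Q x * g x) = 0"
    and f: "continuous_on UNIV f" and fB: "\<And>x. \<bar>f x\<bar> \<le> B" and "0 < \<epsilon>" "\<epsilon> \<le> 1"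
  shows "norm (LINT x|M. f x *\<^sub>R g x) \<le> \<epsilon> * ((LINT x|M. norm (g x)) + 2 * B + 1)"
proof -
  let ?I = "LINT x|M. f x *\<^sub>R g x" and ?G = "LINT x|M. norm (g x)"
  have "B \<ge> 0" using fB[of undefined] by simp
  have "(\<lambda>x. complex_of_real (f x)) \<in> borel_measurable borel"
    using f by (intro borel_measurable_continuous_onI continuous_intros)
  then have int_f: "integrable M (\<lambda>x. f x *\<^sub>R g x)"
    using integrable_bounded_mult[OF g, of "\<lambda>x. complex_of_real (f x)" B] fB
    by (simp add: scaleR_conv_of_real measurable_cong_sets[OF sets refl])
  obtain R where "0 < R" and tail: "(LINT x:- cbox (- R *\<^sub>R One) (R *\<^sub>R One)|M. norm (g x)) < \<epsilon>"
    using set_integral_norm_outside_cbox_small[OF sets g \<open>0 < \<epsilon>\<close>] by blast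
  let ?out = "- cbox (- R *\<^sub>R One) (R *\<^sub>R One)"
  obtain q where q: "(\<lambda>x. complex_of_real (q x)) \<in> trig_poly"
    and q_close: "\<And>x. x \<in> cbox (- R *\<^sub>R One) (R *\<^sub>R One) \<Longrightarrow> \<bar>f x - q x\<bar> < \<epsilon>"
    and q_bound: "\<And>x. \<bar>q x\<bar> \<le> B + \<epsilon>"
    using trig_poly_approximation[OF f fB \<open>0 < R\<close> \<open>0 < \<epsilon>\<close>] by blast
  have int_q: "integrable M (\<lambda>x. q x *\<^sub>R g x)"
    using integrable_trig_poly_mult[OF sets g q] by (simp add: scaleR_conv_of_real)
  have "(LINT x|M. q x *\<^sub>R g x) = 0"
    using trig[OF q] by (simp add: scaleR_conv_of_real)
  then have "?I = (LINT x|M. (f x - q x) *\<^sub>R g x)"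
    using int_f int_q by (simp add: scaleR_diff_left)
  have int_out: "integrable M (\<lambda>x. indicator ?out x * norm (g x))"
    using integrable_mult_indicator[of ?out M "\<lambda>x. norm (g x)"] sets g by simp
  have pointwise: "\<bar>f x - q x\<bar> \<le> \<epsilon> + (2 * B + \<epsilon>) * indicator ?out x" for x
    using q_close[of x] fB[of x] q_bound[of x] \<open>0 < \<epsilon>\<close> by (cases "x \<in> ?out") (auto simp: abs_le_iff)
  have "norm (LINT x|M. (f x - q x) *\<^sub>R g x)
      \<le> (LINT x|M. \<epsilon> * norm (g x) + (2 * B + \<epsilon>) * (indicator ?out x * norm (g x)))"
  proof (rule Bochner_Integration.integral_norm_bound_integral)
    show "integrable M (\<lambda>x. (f x - q x) *\<^sub>R g x)" using int_f int_q by (simp add: scaleR_diff_left)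
    show "norm ((f x - q x) *\<^sub>R g x)
        \<le> \<epsilon> * norm (g x) + (2 * B + \<epsilon>) * (indicator ?out x * norm (g x))" for x
    proof -
      have "norm ((f x - q x) *\<^sub>R g x) \<le> (\<epsilon> + (2 * B + \<epsilon>) * indicator ?out x) * norm (g x)"
        using mult_right_mono[OF pointwise[of x] norm_ge_zero[of "g x"]] by simp
      then show ?thesis by (simp add: algebra_simps)
    qed
  qed (use g int_out in simp)
  also have "\<dots> = \<epsilon> * ?G + (2 * B + \<epsilon>) * (LINT x:?out|M. norm (g x))"
    using g int_out by (simp add: set_lebesgue_integral_def)
  also have "\<dots> \<le> \<epsilon> * ?G + (2 * B + 1) * \<epsilon>"
    using tail \<open>B \<ge> 0\<close> \<open>\<epsilon> \<le> 1\<close>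
    by (intro add_left_mono mult_mono) (auto simp: set_lebesgue_integral_def)
  finally show ?thesis
    using \<open>?I = _\<close> by (simp add: algebra_simps)
qed

lemma integral_continuous_eq_0_if_trig_poly:
  fixes g :: "'a::euclidean_space \<Rightarrow> complex" and f :: "'a \<Rightarrow> real"
  assumes sets: "sets M = sets borel" and g: "integrable M g"
    and trig: "\<And>Q. Q \<in> trig_poly \<Longrightarrow> (LINT x|M. Q x * g x) = 0"
    and f: "continuous_on UNIV f" and fB: "\<And>x. \<bar>f x\<bar> \<le> B"
  shows "(LINT x|M. f x *\<^sub>R g x) = 0"
proof -
  let ?I = "LINT x|M. f x *\<^sub>R g x"
  define C where "C = (LINT x|M. norm (g x)) + 2 * B + 1"
  have "C > 0" using fB[of undefined] by (simp add: C_def add_nonneg_pos)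
  have "norm ?I \<le> 0"
  proof (rule field_le_epsilon)
    fix e :: real assume "0 < e"
    have "norm ?I \<le> min 1 (e / C) * C"
      unfolding C_def using \<open>0 < e\<close> \<open>C > 0\<close>
      by (intro norm_integral_continuous_le_if_trig_poly[OF sets g trig f fB]) (auto simp: C_def)
    also have "\<dots> \<le> e" using \<open>C > 0\<close> by (simp add: min_mult_distrib_right)
    finally show "norm ?I \<le> 0 + e" by simp
  qed
  then show ?thesis by simp
qed

lemma set_integral_open_eq_0_if_continuous:
  fixes g :: "'a::metric_space \<Rightarrow> 'b::{banach, second_countable_topology}"
  assumes sets: "sets M = sets borel" and g: "integrable M g"
    and cont: "\<And>f. continuous_on UNIV f \<Longrightarrow> (\<And>x. \<bar>f x\<bar> \<le> 1) \<Longrightarrow> (LINT x|M. f x *\<^sub>R g x) = 0"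
    and U: "open U"
  shows "(LINT x:U|M. g x) = 0"
proof (cases "U = UNIV")
  case True
  then show ?thesis using cont[of "\<lambda>x. 1"] by (simp add: set_lebesgue_integral_def)
next
  case False
  define f :: "nat \<Rightarrow> 'a \<Rightarrow> real" where "f m x = min 1 (real m * infdist x (- U))" for m x
  have "(\<lambda>m. LINT x|M. f m x *\<^sub>R g x) \<longlonglongrightarrow> (LINT x|M. indicator U x *\<^sub>R g x)"
  proof (rule integral_dominated_convergence[where w="\<lambda>x. norm (g x)"])
    show "(\<lambda>x. indicator U x *\<^sub>R g x) \<in> borel_measurable M"
      using g sets U by (intro borel_measurable_scaleR borel_measurable_indicator)
        (auto simp: borel_measurable_integrable)
    show "(\<lambda>x. f m x *\<^sub>R g x) \<in> borel_measurable M" for m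
    proof (rule borel_measurable_scaleR)
      show "f m \<in> borel_measurable M"
        unfolding f_def measurable_cong_sets[OF sets refl]
        by (intro borel_measurable_continuous_onI continuous_intros)
    qed (use g in \<open>simp add: borel_measurable_integrable\<close>)
    show "AE x in M. norm (f m x *\<^sub>R g x) \<le> norm (g x)" for m
      by (intro AE_I2) (auto simp: f_def infdist_nonneg intro!: mult_left_le_one_le)
    show "AE x in M. (\<lambda>m. f m x *\<^sub>R g x) \<longlonglongrightarrow> indicator U x *\<^sub>R g x"
    proof (intro AE_I2 tendsto_eventually)
      fix x
      show "\<forall>\<^sub>F m in sequentially. f m x *\<^sub>R g x = indicator U x *\<^sub>R g x"
      proof (cases "x \<in> U")
        case True
        then have "infdist x (- U) > 0"
          using U False infdist_pos_not_in_closed[of "- U" x] by auto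
        moreover obtain N :: nat where "1 / infdist x (- U) \<le> real N"
          using real_arch_simple by blast
        ultimately have "1 \<le> real m * infdist x (- U)" if "N \<le> m" for m
          using that by (simp add: field_simps) (meson of_nat_le_iff order_trans mult_right_mono less_imp_le)
        then show ?thesis
          using True by (auto simp: f_def eventually_sequentially intro!: exI[of _ N])
      qed (simp add: f_def)
    qed
  qed (use g in auto)
  moreover have "(LINT x|M. f m x *\<^sub>R g x) = 0" for m
    by (rule cont) (auto simp: f_def infdist_nonneg intro!: continuous_intros)
  ultimately show ?thesis by (simp add: set_lebesgue_integral_def LIMSEQ_const_iff)
qed

lemma set_integral_borel_eq_0_if_open:
  fixes g :: "'a::topological_space \<Rightarrow> 'b::{banach, second_countable_topology}"
  assumes sets: "sets M = sets borel" and g: "integrable M g"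
    and "open": "\<And>U. open U \<Longrightarrow> (LINT x:U|M. g x) = 0"
    and B: "B \<in> sets borel"
  shows "(LINT x:B|M. g x) = 0"
proof -
  have set_int: "set_integrable M A g" if "A \<in> sets borel" for A
    using that sets g by (simp add: set_integrable_def integrable_mult_indicator)
  have "Int_stable {U::'a set. open U}" by (auto simp: Int_stable_def)
  moreover have "{U::'a set. open U} \<subseteq> Pow UNIV" by simp
  moreover have "B \<in> sigma_sets UNIV {U. open U}" using B by (simp add: sets_borel)
  ultimately show ?thesis
  proof (induction rule: sigma_sets_induct_disjoint)
    case (compl A)
    then have "A \<in> sets borel" by (simp add: sets_borel)
    have "(LINT x:UNIV - A|M. g x) = (LINT x|M. g x - indicator A x *\<^sub>R g x)"
      unfolding set_lebesgue_integral_def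
      by (intro Bochner_Integration.integral_cong) (auto simp: indicator_def)
    also have "\<dots> = (LINT x:UNIV|M. g x) - (LINT x:A|M. g x)"
      using g set_int[OF \<open>A \<in> sets borel\<close>]
      by (simp add: set_lebesgue_integral_def set_integrable_def)
    finally show ?case using compl.IH "open"[of UNIV] by simp
  next
    case (union A)
    then have "A i \<in> sets borel" for i by (auto simp: sets_borel)
    with union show ?case
      by (subst lebesgue_integral_countable_add)
        (auto simp: disjoint_family_on_def sets intro!: set_int)
  qed (auto simp: "open")
qed

theorem cmeasure_val_eq_0_if_cfourier_eq_0:
  fixes M :: "'a::euclidean_space measure"
  assumes "finite_cmeasure M g" and fourier: "\<And>\<xi>. cfourier M g \<xi> = 0" and "B \<in> sets borel"
  shows "cmeasure_val M g B = 0"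
proof -
  have sets: "sets M = sets borel" and g: "integrable M g"
    using assms(1) by (auto simp: finite_cmeasure_def)
  have "(LINT x|M. Q x * g x) = 0" if "Q \<in> trig_poly" for Q
    using that
  proof induction
    case (fourier_char \<xi>)
    then show ?case using fourier[of "- \<xi>"] by (simp add: cfourier_eq_integral_fourier_char)
  next
    case (add f1 f2)
    then show ?case
      using integrable_trig_poly_mult[OF sets g] by (simp add: distrib_right)
  qed (simp add: mult.assoc)
  then have "(LINT x|M. f x *\<^sub>R g x) = 0" if "continuous_on UNIV f" "\<And>x. \<bar>f x\<bar> \<le> 1" for f
    using integral_continuous_eq_0_if_trig_poly[OF sets g _ that] by blast
  then have "(LINT x:U|M. g x) = 0" if "open U" for U
    using set_integral_open_eq_0_if_continuous[OF sets g _ that] by blast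
  then show ?thesis
    using set_integral_borel_eq_0_if_open[OF sets g _ \<open>B \<in> sets borel\<close>]
    by (simp add: cmeasure_val_def)
qed

section \<open>Images of complex measures\<close>

lemma distr_density_has_density:
  fixes T :: "'a \<Rightarrow> 'b::euclidean_space" and f :: "'a \<Rightarrow> real"
  assumes M: "finite_measure M" and T: "T \<in> measurable M borel"
    and f: "integrable M f" and f_nonneg: "\<And>x. 0 \<le> f x"
  obtains r where "r \<in> borel_measurable borel" "\<And>y. 0 \<le> r y"
    and "density (distr M borel T) (\<lambda>y. ennreal (r y)) = distr (density M f) borel T"
proof -
  interpret M: finite_measure M by (rule M)
  interpret T_M: finite_measure "distr M borel T" by (rule M.finite_measure_distr[OF T])
  let ?N = "distr (density M f) borel T"
  have T_D: "T \<in> measurable (density M f) borel" using T by simp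
  have ac: "absolutely_continuous (distr M borel T) ?N"
    unfolding absolutely_continuous_def
  proof
    fix A assume "A \<in> null_sets (distr M borel T)"
    then have "A \<in> sets borel" and "T -` A \<inter> space M \<in> null_sets M"
      using T by (auto simp: null_sets_def emeasure_distr)
    then have "T -` A \<inter> space M \<in> null_sets (density M f)"
      using absolutely_continuousI_density[of f M] f
      unfolding absolutely_continuous_def by (auto simp: borel_measurable_integrable)
    then show "A \<in> null_sets ?N"
      using \<open>A \<in> sets borel\<close> T_D by (auto simp: null_sets_def emeasure_distr)
  qed
  have sets_N: "sets ?N = sets (distr M borel T)" by simp
  let ?r = "RN_deriv (distr M borel T) ?N"
  show thesis
  proof
    show "(\<lambda>y. enn2real (?r y)) \<in> borel_measurable borel"
      using borel_measurable_RN_deriv[of "distr M borel T" ?N] by simp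
    have "AE y in distr M borel T. ?r y \<noteq> \<infinity>"
    proof (rule T_M.RN_deriv_finite[OF _ ac sets_N])
      have "emeasure (density M f) (space M) = ennreal (integral\<^sup>L M f)"
        using f f_nonneg
        by (simp add: emeasure_density nn_integral_eq_integral[symmetric] borel_measurable_integrable)
      then have "finite_measure (density M f)" by (intro finite_measureI) simp
      then interpret D: finite_measure "density M f" .
      interpret N: finite_measure ?N by (rule D.finite_measure_distr[OF T_D])
      show "sigma_finite_measure ?N" by unfold_locales
    qed
    then have "density (distr M borel T) (\<lambda>y. ennreal (enn2real (?r y)))
        = density (distr M borel T) ?r"
      by (intro density_cong) (auto elim!: AE_mp simp: less_top)
    also have "\<dots> = ?N" by (rule T_M.density_RN_deriv[OF ac sets_N])
    finally show "density (distr M borel T) (\<lambda>y. ennreal (enn2real (?r y))) = ?N" .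
  qed simp
qed

text \<open>The complex measure r \<cdot> (distr M borel T) is the image of k \<cdot> M under T, tested against
  bounded Borel functions.\<close>

definition pushforward_density ::
    "'a measure \<Rightarrow> ('a \<Rightarrow> 'b::euclidean_space) \<Rightarrow> ('a \<Rightarrow> complex) \<Rightarrow> ('b \<Rightarrow> complex) \<Rightarrow> bool" where
  "pushforward_density M T k r \<longleftrightarrow> integrable (distr M borel T) r \<and>
    (\<forall>g. g \<in> borel_measurable borel \<longrightarrow> (\<exists>B. \<forall>y. norm (g y) \<le> B) \<longrightarrow>
      (LINT y|distr M borel T. g y * r y) = (LINT x|M. g (T x) * k x))"

lemma pushforward_density_nonneg:
  fixes T :: "'a \<Rightarrow> 'b::euclidean_space" and f :: "'a \<Rightarrow> real"
  assumes "finite_measure M" and T: "T \<in> measurable M borel"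
    and f: "integrable M f" and f_nonneg: "\<And>x. 0 \<le> f x"
  shows "\<exists>r. pushforward_density M T (\<lambda>x. complex_of_real (f x)) r"
proof -
  obtain r where r: "r \<in> borel_measurable borel" and r_nonneg: "\<And>y. 0 \<le> r y"
    and density: "density (distr M borel T) (\<lambda>y. ennreal (r y)) = distr (density M f) borel T"
    using distr_density_has_density[OF assms] by blast
  have transfer: "(LINT y|distr M borel T. r y *\<^sub>R g y) = (LINT x|M. f x *\<^sub>R g (T x))"
    if g: "g \<in> borel_measurable borel" for g :: "'b \<Rightarrow> complex"
  proof -
    have "(LINT y|distr M borel T. r y *\<^sub>R g y) = (LINT y|distr (density M f) borel T. g y)"
      using g r r_nonneg by (simp add: integral_density[symmetric] density)
    also have "\<dots> = (LINT x|density M f. g (T x))"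
      using g T by (intro integral_distr) auto
    also have "\<dots> = (LINT x|M. f x *\<^sub>R g (T x))"
      using g T f f_nonneg by (subst integral_density) (auto simp: borel_measurable_integrable)
    finally show ?thesis .
  qed
  have "integrable (distr M borel T) r"
  proof -
    have "integrable (distr (density M f) borel T) (\<lambda>_. 1::real)"
      using f f_nonneg T
      by (subst integrable_distr_eq) (auto simp: integrable_density borel_measurable_integrable)
    then show ?thesis
      using integrable_density[of "\<lambda>_. 1::real" "distr M borel T" r] r r_nonneg density by simp
  qed
  then have "pushforward_density M T (\<lambda>x. complex_of_real (f x)) (\<lambda>y. complex_of_real (r y))"
    unfolding pushforward_density_def
    using transfer by (auto simp: scaleR_conv_of_real mult.commute)
  then show ?thesis by blast
qed

lemma pushforward_density_add:
  fixes T :: "'a \<Rightarrow> 'b::euclidean_space"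
  assumes T: "T \<in> measurable M borel" and k1: "integrable M k1" and k2: "integrable M k2"
    and r1: "pushforward_density M T k1 r1" and r2: "pushforward_density M T k2 r2"
  shows "pushforward_density M T (\<lambda>x. k1 x + k2 x) (\<lambda>y. r1 y + r2 y)"
  unfolding pushforward_density_def
proof (intro conjI allI impI)
  show "integrable (distr M borel T) (\<lambda>y. r1 y + r2 y)"
    using r1 r2 by (simp add: pushforward_density_def)
  fix g :: "'b \<Rightarrow> complex" assume g: "g \<in> borel_measurable borel" and "\<exists>B. \<forall>y. norm (g y) \<le> B"
  then obtain B where B: "\<And>y. norm (g y) \<le> B" by blast
  have g_T: "g \<in> borel_measurable (distr M borel T)" and gT_M: "(\<lambda>x. g (T x)) \<in> borel_measurable M"
    using g T by auto
  have "integrable (distr M borel T) r1" "integrable (distr M borel T) r2"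
    using r1 r2 by (auto simp: pushforward_density_def)
  then have "integrable (distr M borel T) (\<lambda>y. g y * r1 y)"
    "integrable (distr M borel T) (\<lambda>y. g y * r2 y)"
    "integrable M (\<lambda>x. g (T x) * k1 x)" "integrable M (\<lambda>x. g (T x) * k2 x)"
    using integrable_bounded_mult[OF _ g_T B] integrable_bounded_mult[OF _ gT_M B] k1 k2 by auto
  then show "(LINT y|distr M borel T. g y * (r1 y + r2 y)) = (LINT x|M. g (T x) * (k1 x + k2 x))"
    using r1 r2 g \<open>\<exists>B. \<forall>y. norm (g y) \<le> B\<close> by (simp add: distrib_left pushforward_density_def)
qed

lemma pushforward_density_scale:
  assumes "pushforward_density M T k r"
  shows "pushforward_density M T (\<lambda>x. c * k x) (\<lambda>y. c * r y)"
  using assms by (simp add: pushforward_density_def mult.left_commute[of _ c])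

lemma pushforward_density_exists:
  fixes T :: "'a \<Rightarrow> 'b::euclidean_space"
  assumes M: "finite_measure M" and T: "T \<in> measurable M borel" and k: "integrable M k"
  shows "\<exists>r. pushforward_density M T k r"
proof -
  have real: "\<exists>r. pushforward_density M T (\<lambda>x. complex_of_real (\<phi> x)) r"
    if \<phi>: "integrable M \<phi>" for \<phi>
  proof -
    obtain r1 r2 where
      r1: "pushforward_density M T (\<lambda>x. complex_of_real (max 0 (\<phi> x))) r1" and
      r2: "pushforward_density M T (\<lambda>x. complex_of_real (max 0 (- \<phi> x))) r2"
      using pushforward_density_nonneg[OF M T, of "\<lambda>x. max 0 (\<phi> x)"]
        pushforward_density_nonneg[OF M T, of "\<lambda>x. max 0 (- \<phi> x)"] \<phi> by auto
    have "pushforward_density M T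
        (\<lambda>x. complex_of_real (max 0 (\<phi> x)) + - 1 * complex_of_real (max 0 (- \<phi> x)))
        (\<lambda>y. r1 y + - 1 * r2 y)"
      using \<phi> by (intro pushforward_density_add[OF T] pushforward_density_scale r1 r2) auto
    moreover have "(\<lambda>x. complex_of_real (max 0 (\<phi> x)) + - 1 * complex_of_real (max 0 (- \<phi> x)))
        = (\<lambda>x. complex_of_real (\<phi> x))"
      by (auto simp: fun_eq_iff max_def)
    ultimately show ?thesis by auto
  qed
  obtain r1 r2 where
    r1: "pushforward_density M T (\<lambda>x. complex_of_real (Re (k x))) r1" and
    r2: "pushforward_density M T (\<lambda>x. complex_of_real (Im (k x))) r2"
    using real[of "\<lambda>x. Re (k x)"] real[of "\<lambda>x. Im (k x)"] k by auto
  have "pushforward_density M T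
      (\<lambda>x. complex_of_real (Re (k x)) + \<i> * complex_of_real (Im (k x))) (\<lambda>y. r1 y + \<i> * r2 y)"
    using k by (intro pushforward_density_add[OF T] pushforward_density_scale r1 r2) auto
  moreover have "(\<lambda>x. complex_of_real (Re (k x)) + \<i> * complex_of_real (Im (k x))) = k"
    by (simp add: fun_eq_iff complex_eq_iff)
  ultimately show ?thesis by auto
qed

lemma finite_cmeasure_pushforward:
  assumes "finite_measure M" "T \<in> measurable M borel" "pushforward_density M T k r"
  shows "finite_cmeasure (distr M borel T) r"
  using assms finite_measure.finite_measure_distr
  by (auto simp: finite_cmeasure_def pushforward_density_def)

lemma cfourier_pushforward:
  assumes "pushforward_density M T k r"
  shows "cfourier (distr M borel T) r \<eta> = (LINT x|M. fourier_char (- \<eta>) (T x) * k x)"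
proof -
  have "fourier_char (- \<eta>) \<in> borel_measurable borel"
    by (intro borel_measurable_continuous_onI continuous_on_fourier_char)
  moreover have "\<exists>B. \<forall>y. norm (fourier_char (- \<eta>) y) \<le> B" by auto
  ultimately show ?thesis
    using assms by (simp add: pushforward_density_def cfourier_eq_integral_fourier_char)
qed

lemma cmeasure_val_pushforward:
  assumes "pushforward_density M T k r" "N \<in> sets borel"
  shows "cmeasure_val (distr M borel T) r N = (LINT x|M. indicator N (T x) *\<^sub>R k x)"
proof -
  have "(\<lambda>y. complex_of_real (indicator N y)) \<in> borel_measurable borel" using assms(2) by simp
  moreover have "\<exists>B. \<forall>y. norm (complex_of_real (indicator N y)) \<le> B"
    by (auto intro!: exI[of _ 1] simp: indicator_def)
  ultimately show ?thesis
    using assms(1)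
    by (simp add: pushforward_density_def cmeasure_val_def set_lebesgue_integral_def
        scaleR_conv_of_real)
qed

lemma cspectrum_subset_vimage:
  assumes \<phi>: "continuous_on UNIV \<phi>" and fourier: "\<And>\<eta>. cfourier M' r \<eta> = cfourier M h (\<phi> \<eta>)"
  shows "cspectrum M' r \<subseteq> \<phi> -` cspectrum M h"
  unfolding cspectrum_def
proof (rule closure_minimal)
  show "{\<eta>. cfourier M' r \<eta> \<noteq> 0} \<subseteq> \<phi> -` closure {\<xi>. cfourier M h \<xi> \<noteq> 0}"
    using fourier closure_subset by fastforce
  show "closed (\<phi> -` closure {\<xi>. cfourier M h \<xi> \<noteq> 0})"
    using \<phi> by (simp add: closed_vimage)
qed

section \<open>Linear isometries\<close>

lemma linear_isometry_inner:
  fixes L :: "'a::real_inner \<Rightarrow> 'b::real_inner"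
  assumes L: "linear L" and norm_L: "\<And>y. norm (L y) = norm y"
  shows "L y \<bullet> L z = y \<bullet> z"
proof -
  have square: "L v \<bullet> L v = v \<bullet> v" for v
    using norm_L[of v] by (metis power2_norm_eq_inner)
  have "(L y + L z) \<bullet> (L y + L z) = (y + z) \<bullet> (y + z)"
    using square[of "y + z"] by (simp add: linear_add[OF L])
  then show ?thesis
    using square[of y] square[of z] by (simp add: inner_add inner_commute)
qed

lemma adjoint_linear_isometry:
  fixes L :: "'a::euclidean_space \<Rightarrow> 'b::euclidean_space"
  assumes L: "linear L" and norm_L: "\<And>y. norm (L y) = norm y"
  shows "adjoint L (L y) = y"
proof -
  have "(adjoint L (L y) - y) \<bullet> z = 0" for z
    by (simp add: inner_diff_left adjoint_clauses(2)[OF L] linear_isometry_inner[OF L norm_L])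
  then show ?thesis by (metis eq_iff_diff_eq_0 inner_eq_zero_iff)
qed

lemma orth_proj_range_linear_isometry:
  fixes L :: "'a::euclidean_space \<Rightarrow> 'b::euclidean_space"
  assumes L: "linear L" and norm_L: "\<And>y. norm (L y) = norm y"
  shows "orth_proj (range L) x = L (adjoint L x)"
proof -
  have orth_iff: "(\<forall>w\<in>range L. (x - L y) \<bullet> w = 0) \<longleftrightarrow> y = adjoint L x" for y
  proof -
    have "(x - L y) \<bullet> L z = (adjoint L x - y) \<bullet> z" for z
      by (simp add: inner_diff_left adjoint_clauses(2)[OF L] linear_isometry_inner[OF L norm_L])
    then show ?thesis
      by (metis (no_types, lifting) eq_iff_diff_eq_0 inner_eq_zero_iff inner_zero_left rangeE rangeI)
  qed
  show ?thesis
    unfolding orth_proj_def by (rule the_equality) (use orth_iff in auto)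
qed

lemma vimage_orth_proj_range_linear_isometry:
  fixes L :: "'a::euclidean_space \<Rightarrow> 'b::euclidean_space"
  assumes L: "linear L" and norm_L: "\<And>y. norm (L y) = norm y"
  shows "L -` (orth_proj (range L) ` F) = adjoint L ` F"
  using adjoint_linear_isometry[OF L norm_L]
  by (auto simp: orth_proj_range_linear_isometry[OF L norm_L]) (metis image_eqI)

lemma borel_measurable_adjoint:
  fixes L :: "'a::euclidean_space \<Rightarrow> 'b::euclidean_space"
  assumes "linear L"
  shows "adjoint L \<in> borel_measurable borel"
  by (intro borel_measurable_continuous_onI linear_continuous_on
      linear_linear[THEN iffD2, OF adjoint_linear[OF assms]])

section \<open>Measures with spectrum in a set with Riesz fibres\<close>

lemma finite_cmeasure_restrict:
  assumes "finite_cmeasure M h" "S \<in> sets borel"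
  shows "finite_cmeasure M (\<lambda>x. indicator S x *\<^sub>R h x)"
  using assms integrable_mult_indicator[of S M h] by (simp add: finite_cmeasure_def)

lemma cmeasure_val_restrict:
  "cmeasure_val M (\<lambda>x. indicator S x *\<^sub>R h x) F = cmeasure_val M h (F \<inter> S)"
  unfolding cmeasure_val_def set_lebesgue_integral_def
  by (intro Bochner_Integration.integral_cong) (auto split: split_indicator)

lemma cfourier_restrict_vimage_adjoint_eq_0:
  fixes A :: "'n::euclidean_space set" and L :: "'k::euclidean_space \<Rightarrow> 'n"
  assumes \<mu>: "finite_cmeasure M h" and spectrum: "cspectrum M h \<subseteq> A" and L: "linear L"
    and riesz: "\<And>a. riesz_set {y. L y + a \<in> A}" and N: "N \<in> null_sets lborel"
  shows "cfourier M (\<lambda>x. indicator (adjoint L -` N) x *\<^sub>R h x) \<xi> = 0"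
proof -
  let ?T = "adjoint L" and ?k = "\<lambda>x. fourier_char (- \<xi>) x * h x"
  have sets: "sets M = sets borel" and "finite_measure M" and "integrable M h"
    using \<mu> by (auto simp: finite_cmeasure_def)
  have T: "?T \<in> measurable M borel"
    using borel_measurable_adjoint[OF L] by (simp add: measurable_cong_sets[OF sets refl])
  have "fourier_char (- \<xi>) \<in> borel_measurable M"
    by (simp add: measurable_cong_sets[OF sets refl] borel_measurable_continuous_onI
        continuous_on_fourier_char)
  then have "integrable M ?k"
    by (rule integrable_bounded_mult[OF \<open>integrable M h\<close> _ , of _ 1]) simp
  then obtain r where r: "pushforward_density M ?T ?k r"
    using pushforward_density_exists[OF \<open>finite_measure M\<close> T] by blast
  have char: "fourier_char (- \<eta>) (?T x) * fourier_char (- \<xi>) x = fourier_char (- (L \<eta> + \<xi>)) x"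
    for \<eta> x
    by (simp add: fourier_char_def adjoint_clauses(1)[OF L] linear_neg[OF L] inner_add_left
        exp_add[symmetric] algebra_simps)
  have "cfourier (distr M borel ?T) r \<eta> = cfourier M h (L \<eta> + \<xi>)" for \<eta>
    unfolding cfourier_pushforward[OF r] cfourier_eq_integral_fourier_char[of M h]
    by (simp add: char mult.assoc[symmetric])
  then have "cspectrum (distr M borel ?T) r \<subseteq> {y. L y + \<xi> \<in> A}"
    using cspectrum_subset_vimage[of "\<lambda>\<eta>. L \<eta> + \<xi>"] spectrum
      linear_continuous_on[OF linear_linear[THEN iffD2, OF L]]
    by (fastforce intro: continuous_intros)
  then have "cabs_cont (distr M borel ?T) r"
    using riesz[of \<xi>] finite_cmeasure_pushforward[OF \<open>finite_measure M\<close> T r]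
    unfolding riesz_set_def by blast
  moreover have "N \<in> sets borel" "emeasure lborel N = 0" using N by auto
  ultimately have "cmeasure_val (distr M borel ?T) r N = 0" unfolding cabs_cont_def by blast
  then show ?thesis
    unfolding cmeasure_val_pushforward[OF r \<open>N \<in> sets borel\<close>]
    by (simp add: cfourier_eq_integral_fourier_char indicator_vimage scaleR_conv_of_real
        mult.left_commute)
qed

theorem mainTheorem9:
  fixes A :: "'n::euclidean_space set"
    and M :: "'n measure" and h :: "'n \<Rightarrow> complex"
    and L :: "'k::euclidean_space \<Rightarrow> 'n"
  assumes "finite_cmeasure M h"
    and "cspectrum M h \<subseteq> A"
    and "linear L" and "\<And>y. norm (L y) = norm y"
    and "\<And>a. riesz_set {y. L y + a \<in> A}"
    and "F \<in> sets borel"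
    and "L -` (orth_proj (range L) ` F) \<in> null_sets lebesgue"
  shows "cmeasure_val M h F = 0"
proof -
  let ?T = "adjoint L"
  have "?T ` F \<in> null_sets (completion lborel)"
    using assms(7) by (simp add: vimage_orth_proj_range_linear_isometry[OF assms(3,4)])
  then obtain N where N: "N \<in> null_sets lborel" and F_N: "?T ` F \<subseteq> N"
    unfolding null_sets_completion_iff2 by blast
  have "N \<in> sets borel" using N by auto
  then have "?T -` N \<in> sets borel"
    using measurable_sets[OF borel_measurable_adjoint[OF assms(3)], of N] by simp
  let ?g = "\<lambda>x. indicator (?T -` N) x *\<^sub>R h x"
  have "cfourier M ?g \<xi> = 0" for \<xi>
    using cfourier_restrict_vimage_adjoint_eq_0[OF assms(1-3,5) N] .
  then have "cmeasure_val M ?g F = 0"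
    using cmeasure_val_eq_0_if_cfourier_eq_0 finite_cmeasure_restrict assms(1,6)
      \<open>?T -` N \<in> sets borel\<close> by blast
  moreover have "F \<inter> ?T -` N = F" using F_N by blast
  ultimately show ?thesis by (simp add: cmeasure_val_restrict)
qed

end
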